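(* Let $S\subset\mathbb{R}^d$ be a nonempty compact convex set with diameter $D:=\sup_{x,y\in S}\|x-y\|$, and let $f$ be differentiable on $S$ with $L$-Lipschitz gradient on $S$ (not necessarily convex). Let $G:=\sup_{x\in S}\|\nabla f(x)\|<\infty$, fix $C\ge\max\{LD^2,\,GD\}$ with $C>0$, and let $f^*:=\inf_{x\in S}f(x)$. Let $\delta\ge0$ and suppose that for every $x\in S$ a vector $g_\delta(x)\in\mathbb{R}^d$ is available with \[ \big|\langle \nabla f(x)-g_\delta(x),\,s-x\rangle\big|\le\delta\,\|\nabla f(x)\|\quad\text{for all } s\in S. \] Let $\mathcal G(x):=\max_{s\in S}\langle\nabla f(x),\,x-s\rangle$ and $\tilde{\mathcal G}(x):=\max_{s\in S}\langle g_\delta(x),\,x-s\rangle$. Given $x^0\in S$, define iterates for $k=0,1,2,\dots$ by choosing $s^k\in\arg\min_{s\in S}\langle g_\delta(x^k),\,s-x^k\rangle$, setting $\overline\alpha_k:=\big(\tilde{\mathcal G}(x^k)-\delta\|\nabla f(x^k)\|\big)_+/C$ with $(u)_+:=\max\{u,0\}$, and $x^{k+1}:=x^k+\overline\alpha_k(s^k-x^k)$. Suppose there exists $r>0$ such that $\mathrm{dist}(x^k,\partial S)\ge r$ for all $k$. Then $\mathcal G(x^k)\ge r\|\nabla f(x^k)\|$ for all $k$, and if additionally $\delta<r/2$, then for every $K\ge0$, \[ \min_{0\le k\le K}\mathcal G(x^k)\le\frac{1}{1-\frac{2\delta}{r}}\sqrt{\frac{2C\,(f(x^0)-f^* )}{K+1}}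 ; \] consequently $\min_{0\le k\le K}\mathcal G(x^k)=\mathcal O(1/\sqrt K)$ and $\liminf_{k\to\infty}\mathcal G(x^k)=0$.
   Context: $\|\cdot\|$ is the Euclidean norm, $\langle\cdot,\cdot\rangle$ the Euclidean inner product, $\partial S$ is the boundary of $S$ in $\mathbb{R}^d$ and $\mathrm{dist}$ the Euclidean distance. *)

theory Defs
  imports "HOL-Analysis.Analysis" "HOL-Library.Landau_Symbols"
begin

definition fw_gap :: "'a::euclidean_space set \<Rightarrow> 'a \<Rightarrow> 'a \<Rightarrow> real" where
  "fw_gap S v x = (SUP s\<in>S. v \<bullet> (x - s))"

end

theory Submission
  imports Defs
begin

text \<open>An iterate at distance at least \<open>r\<close> from the boundary has the ball of radius \<open>r\<close> around it
  inside \<open>S\<close>; testing the gap with the point \<open>x - r \<nabla>f(x) / \<parallel>\<nabla>f(x)\<parallel>\<close> gives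
  \<open>\<G>(x) \<ge> r \<parallel>\<nabla>f(x)\<parallel>\<close>. The descent lemma turns the short step into the decrease
  \<open>f(x\<^sup>k\<^sup>+\<^sup>1) \<le> f(x\<^sup>k) - (a\<^sub>k)\<^sub>+\<^sup>2 / (2C)\<close>, where, writing \<open>\<G>\<^sub>\<delta>\<close> for the gap computed from \<open>g\<close>,
  \<open>a\<^sub>k = \<G>\<^sub>\<delta>(x\<^sup>k) - \<delta> \<parallel>\<nabla>f(x\<^sup>k)\<parallel> \<ge> \<G>(x\<^sup>k) - 2\<delta> \<parallel>\<nabla>f(x\<^sup>k)\<parallel> \<ge> (1 - 2\<delta>/r) \<G>(x\<^sup>k)\<close>.
  Telescoping bounds the sum of the squared gaps by \<open>2C (f(x\<^sup>0) - f\<^sup>*) / (1 - 2\<delta>/r)\<^sup>2\<close>, and the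
  smallest of \<open>K + 1\<close> nonnegative numbers is at most their root mean square.\<close>

lemma fw_gap_bdd_above:
  fixes S :: "'a::euclidean_space set"
  assumes "bounded S"
  shows "bdd_above ((\<lambda>z. v \<bullet> (x - z)) ` S)"
proof -
  obtain B where B: "\<And>z. z \<in> S \<Longrightarrow> norm z \<le> B"
    using assms by (auto simp: bounded_iff)
  have "v \<bullet> (x - z) \<le> norm v * (norm x + B)" if "z \<in> S" for z
  proof -
    have "v \<bullet> (x - z) \<le> norm v * norm (x - z)" by (rule norm_cauchy_schwarz)
    also have "norm (x - z) \<le> norm x + B" using norm_triangle_ineq4[of x z] B[OF that] by linarith
    finally show ?thesis by (simp add: mult_left_mono)
  qed
  then show ?thesis by (intro bdd_aboveI2)
qed

lemma fw_gap_upper: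
  fixes S :: "'a::euclidean_space set"
  assumes "bounded S" "z \<in> S"
  shows "v \<bullet> (x - z) \<le> fw_gap S v x"
  unfolding fw_gap_def by (rule cSUP_upper[OF assms(2) fw_gap_bdd_above[OF assms(1)]])

lemma fw_gap_least:
  fixes S :: "'a::euclidean_space set"
  assumes "S \<noteq> {}" "\<And>z. z \<in> S \<Longrightarrow> v \<bullet> (x - z) \<le> c"
  shows "fw_gap S v x \<le> c"
  unfolding fw_gap_def using assms by (rule cSUP_least)

lemma fw_gap_nonneg:
  fixes S :: "'a::euclidean_space set"
  assumes "bounded S" "x \<in> S"
  shows "0 \<le> fw_gap S v x"
  using fw_gap_upper[OF assms, where v = v and x = x] by simp

lemma fw_gap_eq_inner_minimizer:
  fixes S :: "'a::euclidean_space set"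
  assumes "s \<in> S" "\<And>z. z \<in> S \<Longrightarrow> v \<bullet> (s - x) \<le> v \<bullet> (z - x)"
  shows "fw_gap S v x = v \<bullet> (x - s)"
  unfolding fw_gap_def using assms by (intro cSup_eq_maximum) (auto simp: inner_diff_right)

lemma fw_gap_perturb:
  fixes S :: "'a::euclidean_space set"
  assumes "bounded S" "S \<noteq> {}" "\<And>z. z \<in> S \<Longrightarrow> \<bar>(v - w) \<bullet> (z - x)\<bar> \<le> \<epsilon>"
  shows "fw_gap S v x \<le> fw_gap S w x + \<epsilon>"
proof (rule fw_gap_least[OF assms(2)])
  fix z assume z: "z \<in> S"
  have "v \<bullet> (x - z) = w \<bullet> (x - z) - (v - w) \<bullet> (z - x)"
    by (simp add: inner_diff_left inner_diff_right)
  then show "v \<bullet> (x - z) \<le> fw_gap S w x + \<epsilon>"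
    using fw_gap_upper[OF assms(1) z, of w x] assms(3)[OF z] by linarith
qed

lemma fw_gap_ge_radius_norm:
  fixes S :: "'a::euclidean_space set"
  assumes "bounded S" "cball x r \<subseteq> S" "0 \<le> r"
  shows "r * norm v \<le> fw_gap S v x"
proof (cases "v = 0")
  case True
  have "x \<in> S" using assms(2,3) by auto
  then show ?thesis using fw_gap_nonneg[OF assms(1)] True by simp
next
  case False
  define z where "z = x - (r / norm v) *\<^sub>R v"
  have "z \<in> S" using assms(2,3) False by (auto simp: z_def dist_norm)
  moreover have "v \<bullet> (x - z) = r * norm v"
    using False by (simp add: z_def power2_norm_eq_inner[symmetric] power2_eq_square)
  ultimately show ?thesis using fw_gap_upper[OF assms(1)] by metis
qed

lemma cball_subset_of_infdist_frontier:
  fixes S :: "'a::euclidean_space set"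
  assumes "closed S" "x \<in> S" "0 < r" "r \<le> infdist x (frontier S)"
  shows "cball x r \<subseteq> S"
proof -
  have "ball x r \<subseteq> S"
  proof (rule ccontr)
    assume "\<not> ball x r \<subseteq> S"
    moreover have "x \<in> ball x r \<inter> S" using assms(2,3) by simp
    ultimately obtain p where p: "p \<in> ball x r" "p \<in> frontier S"
      using connected_Int_frontier[OF connected_ball, of x r S] by blast
    then show False using infdist_le[OF p(2), of x] assms(4) by simp
  qed
  then have "closure (ball x r) \<subseteq> S" using assms(1) closure_minimal by blast
  then show ?thesis using assms(3) by simp
qed

lemma convex_step_mem:
  assumes "convex S" "x \<in> S" "y \<in> S" "0 \<le> u" "u \<le> 1"
  shows "x + u *\<^sub>R (y - x) \<in> S"
  using convexD_alt[OF assms] by (simp add: algebra_simps)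

text \<open>The descent lemma: mean value theorem for
  \<open>t \<mapsto> f (x + t (y - x)) - t \<nabla>f(x)\<cdot>(y - x) - L t\<^sup>2 \<parallel>y - x\<parallel>\<^sup>2 / 2\<close> on \<open>[0, 1]\<close>.\<close>
lemma lipschitz_gradient_upper_bound:
  fixes S :: "'a::euclidean_space set" and f :: "'a \<Rightarrow> real" and grad :: "'a \<Rightarrow> 'a"
  assumes "convex S"
    and diff: "\<And>y. y \<in> S \<Longrightarrow> (f has_derivative (\<lambda>h. grad y \<bullet> h)) (at y within S)"
    and lip: "\<And>y z. y \<in> S \<Longrightarrow> z \<in> S \<Longrightarrow> norm (grad y - grad z) \<le> L * norm (y - z)"
    and "x \<in> S" "y \<in> S"
  shows "f y \<le> f x + grad x \<bullet> (y - x) + L / 2 * (norm (y - x))\<^sup>2"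
proof -
  define d where "d = y - x"
  define z where "z = (\<lambda>t::real. x + t *\<^sub>R d)"
  have zS: "z t \<in> S" if "0 \<le> t" "t \<le> 1" for t
    unfolding z_def d_def using convex_step_mem assms(1,4,5) that .
  define \<psi> where "\<psi> = (\<lambda>t. f (z t) - t * (grad x \<bullet> d) - L / 2 * t\<^sup>2 * (norm d)\<^sup>2)"
  define \<psi>' where "\<psi>' = (\<lambda>t h. h * (grad (z t) \<bullet> d) - h * (grad x \<bullet> d) - h * (L * t * (norm d)\<^sup>2))"
  have "(\<psi> has_derivative \<psi>' t) (at t within {0..1})" if "0 \<le> t" "t \<le> 1" for t
  proof -
    have "(z has_derivative (\<lambda>h. h *\<^sub>R d)) (at t within {0..1})"
      unfolding z_def by (auto intro!: derivative_eq_intros)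
    then have "((\<lambda>t. f (z t)) has_derivative (\<lambda>h. grad (z t) \<bullet> (h *\<^sub>R d))) (at t within {0..1})"
      by (intro has_derivative_in_compose2[OF diff]) (use zS that in auto)
    then show ?thesis unfolding \<psi>_def \<psi>'_def
      by (auto intro!: derivative_eq_intros simp: algebra_simps power2_eq_square)
  qed
  then obtain t where t: "t \<in> {0<..<1}" "\<psi> 1 - \<psi> 0 = \<psi>' t 1"
    using mvt_simple[of 0 1 \<psi> \<psi>'] by auto
  have "\<psi>' t 1 = (grad (z t) - grad x) \<bullet> d - L * t * (norm d)\<^sup>2"
    by (simp add: \<psi>'_def inner_diff_left)
  also have "(grad (z t) - grad x) \<bullet> d \<le> norm (grad (z t) - grad x) * norm d"
    by (rule norm_cauchy_schwarz)
  also have "norm (grad (z t) - grad x) \<le> L * norm (z t - x)"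
    using lip[OF zS \<open>x \<in> S\<close>] t by auto
  also have "norm (z t - x) = t * norm d" using t by (simp add: z_def)
  finally have "\<psi>' t 1 \<le> 0" by (simp add: power2_eq_square mult_right_mono)
  then have "\<psi> 1 \<le> \<psi> 0" using t by simp
  then show ?thesis by (simp add: \<psi>_def z_def d_def)
qed

lemma short_step_decrease:
  fixes S :: "'a::euclidean_space set" and f :: "'a \<Rightarrow> real" and grad :: "'a \<Rightarrow> 'a"
  assumes "convex S"
    and diff: "\<And>y. y \<in> S \<Longrightarrow> (f has_derivative (\<lambda>h. grad y \<bullet> h)) (at y within S)"
    and lip: "\<And>y z. y \<in> S \<Longrightarrow> z \<in> S \<Longrightarrow> norm (grad y - grad z) \<le> L * norm (y - z)"
    and "x \<in> S" "s \<in> S"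
    and a: "a \<le> grad x \<bullet> (x - s)" "a \<le> C"
    and C: "L * (norm (s - x))\<^sup>2 \<le> C" "0 < C"
  shows "f (x + (max a 0 / C) *\<^sub>R (s - x)) \<le> f x - (max a 0)\<^sup>2 / (2 * C)"
proof -
  define \<alpha> where "\<alpha> = max a 0 / C"
  have \<alpha>: "0 \<le> \<alpha>" "\<alpha> \<le> 1" using a C by (auto simp: \<alpha>_def)
  have "f (x + \<alpha> *\<^sub>R (s - x))
      \<le> f x + grad x \<bullet> (\<alpha> *\<^sub>R (s - x)) + L / 2 * (norm (\<alpha> *\<^sub>R (s - x)))\<^sup>2"
    using lipschitz_gradient_upper_bound[OF assms(1) diff lip \<open>x \<in> S\<close>
        convex_step_mem[OF assms(1) \<open>x \<in> S\<close> \<open>s \<in> S\<close> \<alpha>]] by simp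
  also have "\<dots> = f x - \<alpha> * (grad x \<bullet> (x - s)) + \<alpha>\<^sup>2 / 2 * (L * (norm (s - x))\<^sup>2)"
  proof -
    have "grad x \<bullet> (\<alpha> *\<^sub>R (s - x)) = - \<alpha> * (grad x \<bullet> (x - s))"
      by (simp add: inner_diff_right algebra_simps)
    moreover have "norm (\<alpha> *\<^sub>R (s - x)) = \<alpha> * norm (s - x)" using \<alpha> by simp
    ultimately show ?thesis by (simp add: power_mult_distrib)
  qed
  also have "\<dots> \<le> f x - \<alpha> * a + \<alpha>\<^sup>2 / 2 * C"
    using a C \<alpha> by (intro add_mono diff_mono mult_left_mono) auto
  also have "\<dots> = f x - (max a 0)\<^sup>2 / (2 * C)"
    using C by (simp add: \<alpha>_def max_def power2_eq_square field_simps)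
  finally show ?thesis by (simp add: \<alpha>_def)
qed

lemma Min_le_sqrt_of_sum_squares:
  fixes u :: "nat \<Rightarrow> real"
  assumes "\<And>n. (\<Sum>k<n. (u k)\<^sup>2) \<le> M"
  shows "Min (u ` {0..K}) \<le> sqrt (M / (real K + 1))"
proof (cases "Min (u ` {0..K}) \<le> 0")
  case True
  have "0 \<le> M" using assms[of 0] by simp
  then have "0 \<le> sqrt (M / (real K + 1))" by simp
  then show ?thesis using True by linarith
next
  case False
  define m where "m = Min (u ` {0..K})"
  have "m \<le> u k" if "k \<le> K" for k unfolding m_def using that by (intro Min_le) auto
  then have "(\<Sum>k<Suc K. m\<^sup>2) \<le> (\<Sum>k<Suc K. (u k)\<^sup>2)"
    using False unfolding m_def[symmetric] by (intro sum_mono power_mono) auto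
  then have "(real K + 1) * m\<^sup>2 \<le> (\<Sum>k<Suc K. (u k)\<^sup>2)" by (simp add: add.commute)
  also have "\<dots> \<le> M" by (rule assms)
  finally have "m\<^sup>2 \<le> M / (real K + 1)" by (simp add: field_simps)
  then show ?thesis unfolding m_def by (rule real_le_rsqrt)
qed

lemma Min_bigo_inverse_sqrt_of_sum_squares:
  fixes u :: "nat \<Rightarrow> real"
  assumes "\<And>k. 0 \<le> u k" "\<And>n. (\<Sum>k<n. (u k)\<^sup>2) \<le> M"
  shows "(\<lambda>K. Min (u ` {0..K})) \<in> O(\<lambda>K. 1 / sqrt (real K))"
proof (rule bigoI[where c = "sqrt M"])
  show "\<forall>\<^sub>F K in sequentially. norm (Min (u ` {0..K})) \<le> sqrt M * norm (1 / sqrt (real K))"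
    using eventually_ge_at_top[of "1::nat"]
  proof eventually_elim
    case (elim K)
    have "0 \<le> Min (u ` {0..K})" using assms(1) by (auto intro: Min_in)
    moreover have "Min (u ` {0..K}) \<le> sqrt (M / (real K + 1))"
      using Min_le_sqrt_of_sum_squares[OF assms(2)] .
    moreover have "sqrt (M / (real K + 1)) \<le> sqrt M / sqrt (real K)"
      using elim assms(2)[of 0] by (simp add: real_sqrt_divide divide_left_mono)
    ultimately show ?case by simp
  qed
qed

lemma tendsto_zero_of_sum_squares_bounded:
  fixes u :: "nat \<Rightarrow> real"
  assumes "\<And>n. (\<Sum>k<n. (u k)\<^sup>2) \<le> M"
  shows "u \<longlonglongrightarrow> 0"
proof -
  have "summable (\<lambda>k. (u k)\<^sup>2)" using assms by (intro summableI_nonneg_bounded) auto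
  then have "(\<lambda>k. sqrt ((u k)\<^sup>2)) \<longlonglongrightarrow> sqrt 0"
    by (intro tendsto_real_sqrt summable_LIMSEQ_zero)
  then show ?thesis by (simp add: tendsto_rabs_zero_iff)
qed

locale inexact_frank_wolfe =
  fixes S :: "'a::euclidean_space set"
    and f :: "'a \<Rightarrow> real" and grad :: "'a \<Rightarrow> 'a" and g :: "'a \<Rightarrow> 'a"
    and L C \<delta> :: real and x s :: "nat \<Rightarrow> 'a"
  assumes S_nonempty: "S \<noteq> {}" and S_compact: "compact S" and S_convex: "convex S"
    and diff: "\<And>y. y \<in> S \<Longrightarrow> (f has_derivative (\<lambda>h. grad y \<bullet> h)) (at y within S)"
    and lip: "\<And>y z. y \<in> S \<Longrightarrow> z \<in> S \<Longrightarrow> norm (grad y - grad z) \<le> L * norm (y - z)"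
    and grad_bounded: "bounded (grad ` S)"
    and C_ge: "C \<ge> max (L * (diameter S)\<^sup>2) ((SUP y\<in>S. norm (grad y)) * diameter S)"
    and C_pos: "C > 0"
    and \<delta>_nonneg: "\<delta> \<ge> 0"
    and inexact: "\<And>y z. y \<in> S \<Longrightarrow> z \<in> S \<Longrightarrow>
                    \<bar>(grad y - g y) \<bullet> (z - y)\<bar> \<le> \<delta> * norm (grad y)"
    and x0: "x 0 \<in> S"
    and lmo: "\<And>k. s k \<in> S \<and> (\<forall>z\<in>S. g (x k) \<bullet> (s k - x k) \<le> g (x k) \<bullet> (z - x k))"
    and step: "\<And>k. x (Suc k) = x k +
        (max (fw_gap S (g (x k)) (x k) - \<delta> * norm (grad (x k))) 0 / C) *\<^sub>R (s k - x k)"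
begin

definition gap_estimate :: "nat \<Rightarrow> real" where
  "gap_estimate k = fw_gap S (g (x k)) (x k) - \<delta> * norm (grad (x k))"

lemma S_bounded: "bounded S"
  using S_compact by (rule compact_imp_bounded)

lemma s_in_S: "s k \<in> S"
  using lmo by blast

lemma norm_diff_le_diameter: "y \<in> S \<Longrightarrow> z \<in> S \<Longrightarrow> norm (y - z) \<le> diameter S"
  using diameter_bounded_bound[OF S_bounded] by (simp add: dist_norm)

lemma norm_grad_le_Sup: "y \<in> S \<Longrightarrow> norm (grad y) \<le> (SUP y\<in>S. norm (grad y))"
  using grad_bounded by (auto intro!: cSUP_upper bounded_imp_bdd_above simp: bounded_norm_comp)

lemma fw_gap_approx_eq: "fw_gap S (g (x k)) (x k) = g (x k) \<bullet> (x k - s k)"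
  using lmo[of k] by (intro fw_gap_eq_inner_minimizer) auto

lemma gap_estimate_le_inner:
  assumes "x k \<in> S"
  shows "gap_estimate k \<le> grad (x k) \<bullet> (x k - s k)"
  using inexact[OF assms s_in_S[of k]]
  by (auto simp: gap_estimate_def fw_gap_approx_eq inner_diff_left inner_diff_right algebra_simps)

lemma gap_estimate_le_C:
  assumes "x k \<in> S"
  shows "gap_estimate k \<le> C"
proof -
  have "grad (x k) \<bullet> (x k - s k) \<le> norm (grad (x k)) * norm (x k - s k)"
    by (rule norm_cauchy_schwarz)
  also have "\<dots> \<le> (SUP y\<in>S. norm (grad y)) * diameter S"
    using norm_grad_le_Sup[OF assms] norm_diff_le_diameter[OF assms s_in_S[of k]]
    by (intro mult_mono) (auto intro: order_trans[OF norm_ge_zero])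
  finally show ?thesis using gap_estimate_le_inner[OF assms] C_ge by linarith
qed

lemma L_norm_step_le_C:
  assumes "y \<in> S" "z \<in> S"
  shows "L * (norm (y - z))\<^sup>2 \<le> C"
proof (cases "L \<ge> 0")
  case True
  then have "L * (norm (y - z))\<^sup>2 \<le> L * (diameter S)\<^sup>2"
    using norm_diff_le_diameter[OF assms] by (intro mult_left_mono power_mono) auto
  then show ?thesis using C_ge by linarith
next
  case False
  then show ?thesis using C_pos by (smt (verit) mult_nonpos_nonneg zero_le_power2)
qed

lemma step_eq: "x (Suc k) = x k + (max (gap_estimate k) 0 / C) *\<^sub>R (s k - x k)"
  by (simp add: step gap_estimate_def)

lemma x_in_S: "x k \<in> S"
proof (induction k)
  case 0
  show ?case by (rule x0)
next
  case (Suc k)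
  have "max (gap_estimate k) 0 / C \<le> 1"
    using gap_estimate_le_C[OF Suc] C_pos by simp
  then show ?case unfolding step_eq
    using C_pos by (intro convex_step_mem[OF S_convex Suc s_in_S]) auto
qed

lemma objective_decrease: "f (x (Suc k)) \<le> f (x k) - (max (gap_estimate k) 0)\<^sup>2 / (2 * C)"
  unfolding step_eq
  by (rule short_step_decrease[OF S_convex diff lip x_in_S s_in_S gap_estimate_le_inner[OF x_in_S]
        gap_estimate_le_C[OF x_in_S] L_norm_step_le_C[OF s_in_S x_in_S] C_pos])

lemma sum_gap_estimate_squares_le:
  "(\<Sum>k<n. (max (gap_estimate k) 0)\<^sup>2) \<le> 2 * C * (f (x 0) - (INF y\<in>S. f y))"
proof -
  have "compact (f ` S)"
    using diff S_compact
    by (intro compact_continuous_image continuous_on_eq_continuous_within[THEN iffD2])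
      (metis has_derivative_continuous)
  then have "(INF y\<in>S. f y) \<le> f (x n)"
    by (intro cINF_lower x_in_S bounded_imp_bdd_below compact_imp_bounded)
  have "(\<Sum>k<n. (max (gap_estimate k) 0)\<^sup>2) = 2 * C * (\<Sum>k<n. (max (gap_estimate k) 0)\<^sup>2 / (2 * C))"
    using C_pos by (simp add: sum_distrib_left)
  also have "\<dots> \<le> 2 * C * (f (x 0) - f (x n))"
    using objective_decrease C_pos
    by (subst sum_lessThan_telescope'[symmetric], intro mult_left_mono sum_mono) (auto simp: algebra_simps)
  also have "\<dots> \<le> 2 * C * (f (x 0) - (INF y\<in>S. f y))"
    using \<open>(INF y\<in>S. f y) \<le> f (x n)\<close> C_pos by (intro mult_left_mono) auto
  finally show ?thesis .
qed

lemma fw_gap_le_gap_estimate: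
  "fw_gap S (grad (x k)) (x k) \<le> gap_estimate k + 2 * \<delta> * norm (grad (x k))"
  using fw_gap_perturb[OF S_bounded S_nonempty inexact[OF x_in_S[of k]]]
  by (simp add: gap_estimate_def)

lemma fw_gap_ge_radius_norm_grad:
  assumes "0 < r" "r \<le> infdist (x k) (frontier S)"
  shows "r * norm (grad (x k)) \<le> fw_gap S (grad (x k)) (x k)"
  using assms S_compact
  by (intro fw_gap_ge_radius_norm S_bounded cball_subset_of_infdist_frontier x_in_S)
    (auto intro: compact_imp_closed)

lemma sum_fw_gap_squares_le:
  assumes r: "0 < r" "\<And>k. r \<le> infdist (x k) (frontier S)" and \<delta>_r: "\<delta> < r / 2"
  shows "(\<Sum>k<n. (fw_gap S (grad (x k)) (x k))\<^sup>2)
    \<le> 2 * C * (f (x 0) - (INF y\<in>S. f y)) / (1 - 2 * \<delta> / r)\<^sup>2"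
proof -
  define c where "c = 1 - 2 * \<delta> / r"
  have c: "0 < c" using r(1) \<delta>_r by (simp add: c_def field_simps)
  have "c * fw_gap S (grad (x k)) (x k) \<le> max (gap_estimate k) 0" for k
  proof -
    have "2 * \<delta> * norm (grad (x k)) \<le> 2 * \<delta> / r * fw_gap S (grad (x k)) (x k)"
      using fw_gap_ge_radius_norm_grad[OF r(1,2)] r(1) \<delta>_nonneg
      by (simp add: field_simps mult_left_mono)
    then show ?thesis using fw_gap_le_gap_estimate[of k] by (simp add: c_def algebra_simps)
  qed
  then have "c\<^sup>2 * (\<Sum>k<n. (fw_gap S (grad (x k)) (x k))\<^sup>2) \<le> (\<Sum>k<n. (max (gap_estimate k) 0)\<^sup>2)"
    using c fw_gap_nonneg[OF S_bounded x_in_S]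
    by (simp add: sum_distrib_left power_mult_distrib[symmetric]) (intro sum_mono power_mono, auto)
  also have "\<dots> \<le> 2 * C * (f (x 0) - (INF y\<in>S. f y))"
    by (rule sum_gap_estimate_squares_le)
  finally show ?thesis
    using c unfolding c_def[symmetric] by (simp add: pos_le_divide_eq mult.commute)
qed

end

theorem corollary1:
  fixes S :: "'a::euclidean_space set"
    and f :: "'a \<Rightarrow> real" and grad :: "'a \<Rightarrow> 'a" and g :: "'a \<Rightarrow> 'a"
    and L C \<delta> r :: real and x s :: "nat \<Rightarrow> 'a"
  assumes S: "S \<noteq> {}" "compact S" "convex S"
    and diff: "\<And>y. y \<in> S \<Longrightarrow> (f has_derivative (\<lambda>h. grad y \<bullet> h)) (at y within S)"
    and lip: "\<And>y z. y \<in> S \<Longrightarrow> z \<in> S \<Longrightarrow> norm (grad y - grad z) \<le> L * norm (y - z)"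
    and Gfin: "bounded (grad ` S)"
    and C: "C \<ge> max (L * (diameter S)\<^sup>2) ((SUP y\<in>S. norm (grad y)) * diameter S)" "C > 0"
    and \<delta>: "\<delta> \<ge> 0"
    and inexact: "\<And>y z. y \<in> S \<Longrightarrow> z \<in> S \<Longrightarrow>
                    \<bar>(grad y - g y) \<bullet> (z - y)\<bar> \<le> \<delta> * norm (grad y)"
    and x0: "x 0 \<in> S"
    and sk: "\<And>k. s k \<in> S \<and> (\<forall>z\<in>S. g (x k) \<bullet> (s k - x k) \<le> g (x k) \<bullet> (z - x k))"
    and step: "\<And>k. x (Suc k) = x k +
        (max (fw_gap S (g (x k)) (x k) - \<delta> * norm (grad (x k))) 0 / C) *\<^sub>R (s k - x k)"
    and r: "r > 0" "\<And>k. infdist (x k) (frontier S) \<ge> r"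
  shows "(\<forall>k. fw_gap S (grad (x k)) (x k) \<ge> r * norm (grad (x k))) \<and>
         (\<delta> < r / 2 \<longrightarrow>
            (\<forall>K::nat. Min ((\<lambda>k. fw_gap S (grad (x k)) (x k)) ` {0..K})
                \<le> 1 / (1 - 2 * \<delta> / r) * sqrt (2 * C * (f (x 0) - (INF y\<in>S. f y)) / (real K + 1)))
          \<and> (\<lambda>K::nat. Min ((\<lambda>k. fw_gap S (grad (x k)) (x k)) ` {0..K})) \<in> O(\<lambda>K. 1 / sqrt (real K))
          \<and> liminf (\<lambda>k. ereal (fw_gap S (grad (x k)) (x k))) = 0)"
proof -
  interpret inexact_frank_wolfe S f grad g L C \<delta> x s
    using assms by unfold_locales auto
  define gap where "gap k = fw_gap S (grad (x k)) (x k)" for k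
  define M where "M = 2 * C * (f (x 0) - (INF y\<in>S. f y))"
  have "\<forall>k. gap k \<ge> r * norm (grad (x k))"
    unfolding gap_def using fw_gap_ge_radius_norm_grad r by blast
  moreover have "(\<forall>K. Min (gap ` {0..K}) \<le> 1 / (1 - 2 * \<delta> / r) * sqrt (M / (real K + 1)))
      \<and> (\<lambda>K. Min (gap ` {0..K})) \<in> O(\<lambda>K. 1 / sqrt (real K))
      \<and> liminf (\<lambda>k. ereal (gap k)) = 0" if "\<delta> < r / 2"
  proof (intro conjI allI)
    define c where "c = 1 - 2 * \<delta> / r"
    have "0 < c" using r(1) that by (simp add: c_def field_simps)
    have sum_sq: "(\<Sum>k<n. (gap k)\<^sup>2) \<le> M / c\<^sup>2" for n
      unfolding gap_def M_def c_def using sum_fw_gap_squares_le r that .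
    show "Min (gap ` {0..K}) \<le> 1 / (1 - 2 * \<delta> / r) * sqrt (M / (real K + 1))" for K
      using Min_le_sqrt_of_sum_squares[OF sum_sq, of K] \<open>0 < c\<close>
      unfolding c_def[symmetric] by (simp add: real_sqrt_divide real_sqrt_mult)
    show "(\<lambda>K. Min (gap ` {0..K})) \<in> O(\<lambda>K. 1 / sqrt (real K))"
      by (rule Min_bigo_inverse_sqrt_of_sum_squares[OF _ sum_sq])
        (simp add: gap_def fw_gap_nonneg[OF S_bounded x_in_S])
    show "liminf (\<lambda>k. ereal (gap k)) = 0"
      using lim_imp_Liminf[OF trivial_limit_sequentially
          tendsto_ereal[OF tendsto_zero_of_sum_squares_bounded[OF sum_sq]]]
      by (simp add: zero_ereal_def)
  qed
  ultimately show ?thesis unfolding gap_def M_def by blast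
qed

end
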